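(* Fix an integer $k\ge 2$. Let $M$ be the set consisting of the empty composition together with all Fibonacci compositions that start with $(2,1^{k-2})$. Then $M$ is a free monoid under concatenation, and its primes are exactly the compositions of the form $(2,1^{k-2},1^i,q)$ where $i\ge 0$ is an integer and $q$ is either empty or a Fibonacci composition that starts with $2$ and does not contain $(2,1^{k-2})$ as a block of consecutive parts. Moreover, with the weight of a composition being the sum of its parts, the generating function for the primes of $M$ is $\dfrac{x^k}{1-x-x^2+x^k}$, and hence $$1+\frac{x^k}{1-x-x^2}=\Bigl(1-\frac{x^k}{1-x-x^2+x^k}\Bigr)^{-1}.$$
   Context: A Fibonacci composition is a composition (finite sequence of positive integers) all of whose parts are $1$ or $2$; the Fibonacci compositions form the free monoid $\{1,2\}^*$ under concatenation. $1^j$ denotes $j$ consecutive parts equal to $1$. A free monoid is one in which every element factors uniquely as a product of elements of a set of primes. The generating function of a set $S$ of compositions is $\sum_{c\in S} x^{|c|}$ where $|c|$ is the sum of the parts of $c$. *)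

theory Defs
  imports "HOL-Library.Sublist" "HOL-Computational_Algebra.Formal_Power_Series"
begin

definition fib_comp :: "nat list \<Rightarrow> bool" where
  "fib_comp c \<longleftrightarrow> set c \<subseteq> {1, 2}"

definition free_monoid_with_primes :: "'a list set \<Rightarrow> 'a list set \<Rightarrow> bool" where
  "free_monoid_with_primes M P \<longleftrightarrow>
     [] \<in> M \<and> (\<forall>a\<in>M. \<forall>b\<in>M. a @ b \<in> M) \<and> P \<subseteq> M \<and>
     (\<forall>c\<in>M. \<exists>!ps. set ps \<subseteq> P \<and> concat ps = c)"

definition monoid_primes :: "'a list set \<Rightarrow> 'a list set" where
  "monoid_primes M = {c \<in> M. c \<noteq> [] \<and>
      \<not> (\<exists>a\<in>M. \<exists>b\<in>M. a \<noteq> [] \<and> b \<noteq> [] \<and> c = a @ b)}"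

definition comp_gf :: "nat list set \<Rightarrow> real fps" where
  "comp_gf S = Abs_fps (\<lambda>n. real (card {c \<in> S. sum_list c = n}))"

end

theory Submission
  imports Defs
begin

text \<open>The word \<open>w = (2,1\<^sup>k\<^sup>-\<^sup>2)\<close> is unbordered: no nonempty proper prefix of it is also a
  suffix. Hence two occurrences of \<open>w\<close> in a word never overlap, and cutting a word that starts with
  \<open>w\<close> just before every occurrence of \<open>w\<close> is its unique factorisation into words in which \<open>w\<close>
  occurs only at the front; for \<open>w = (2,1\<^sup>k\<^sup>-\<^sup>2)\<close> these are the compositions
  \<open>(2,1\<^sup>k\<^sup>-\<^sup>2,1\<^sup>i,q)\<close>. Splitting off the first prime gives \<open>M(x) = 1 + P(x) M(x)\<close>, while
  \<open>M(x) = 1 + x\<^sup>k F(x)\<close> with \<open>F(x) = 1/(1 - x - x\<^sup>2)\<close> the generating function of all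
  Fibonacci compositions; solving for \<open>P(x)\<close> gives the formula.\<close>

section \<open>Free monoids of words\<close>

lemma free_monoid_concat_mem:
  assumes "free_monoid_with_primes M P" "set ps \<subseteq> P"
  shows "concat ps \<in> M"
  using assms(2) by (induction ps) (use assms(1) in \<open>auto simp: free_monoid_with_primes_def\<close>)

lemma free_monoid_Nil_notin_primes:
  assumes "free_monoid_with_primes M P"
  shows "[] \<notin> P"
proof
  assume "[] \<in> P"
  then have "set [] \<subseteq> P \<and> concat [] = []" "set [[]] \<subseteq> P \<and> concat [[]] = []" by auto
  moreover have "[] \<in> M" using assms by (simp add: free_monoid_with_primes_def)
  ultimately show False using assms unfolding free_monoid_with_primes_def
    by (metis list.distinct(1))
qed

lemma free_monoid_factor:
  assumes "free_monoid_with_primes M P" "c \<in> M"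
  obtains ps where "set ps \<subseteq> P" "concat ps = c"
  using assms by (auto simp: free_monoid_with_primes_def)

lemma free_monoid_cancel:
  assumes fm: "free_monoid_with_primes M P"
    and "p \<in> P" "p' \<in> P" "x \<in> M" "y \<in> M" "p @ x = p' @ y"
  shows "p = p' \<and> x = y"
proof -
  obtain xs ys where xs: "set xs \<subseteq> P" "concat xs = x" and ys: "set ys \<subseteq> P" "concat ys = y"
    using free_monoid_factor[OF fm] assms(4,5) by metis
  have "p @ x \<in> M" using fm assms(2,4) by (auto simp: free_monoid_with_primes_def)
  then have "\<exists>!ps. set ps \<subseteq> P \<and> concat ps = p @ x"
    using fm by (simp add: free_monoid_with_primes_def)
  moreover have "set (p # xs) \<subseteq> P" "concat (p # xs) = p @ x"
    "set (p' # ys) \<subseteq> P" "concat (p' # ys) = p @ x"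
    using xs ys assms(2,3,6) by auto
  ultimately have "p # xs = p' # ys" by blast
  then show ?thesis using xs ys by auto
qed

lemma monoid_primes_free_monoid:
  assumes fm: "free_monoid_with_primes M P"
  shows "monoid_primes M = P"
proof (intro set_eqI iffI)
  fix c assume "c \<in> monoid_primes M"
  then have c: "c \<in> M" "c \<noteq> []"
    and irred: "\<And>a b. a \<in> M \<Longrightarrow> b \<in> M \<Longrightarrow> a \<noteq> [] \<Longrightarrow> b \<noteq> [] \<Longrightarrow> c \<noteq> a @ b"
    by (auto simp: monoid_primes_def)
  obtain ps where ps: "set ps \<subseteq> P" "concat ps = c" using free_monoid_factor[OF fm c(1)] .
  then obtain p qs where "ps = p # qs" using c(2) by (cases ps) auto
  with ps have "p \<in> P" "set qs \<subseteq> P" "c = p @ concat qs" by auto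
  moreover have "p \<in> M" "p \<noteq> []" using \<open>p \<in> P\<close> fm free_monoid_Nil_notin_primes[OF fm]
    by (auto simp: free_monoid_with_primes_def)
  ultimately have "concat qs = []" using irred free_monoid_concat_mem[OF fm] by blast
  then show "c \<in> P" using \<open>p \<in> P\<close> \<open>c = p @ concat qs\<close> by (metis append_Nil2)
next
  fix p assume p: "p \<in> P"
  have "p \<in> M" "p \<noteq> []" using p fm free_monoid_Nil_notin_primes[OF fm]
    by (auto simp: free_monoid_with_primes_def)
  moreover have "p \<noteq> a @ b" if ab: "a \<in> M" "b \<in> M" "a \<noteq> []" "b \<noteq> []" for a b
  proof
    assume split: "p = a @ b"
    obtain as bs where "set as \<subseteq> P" "concat as = a" "set bs \<subseteq> P" "concat bs = b"
      using free_monoid_factor[OF fm] ab(1,2) by metis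
    then have "set (as @ bs) \<subseteq> P" "concat (as @ bs) = p" "as \<noteq> []" "bs \<noteq> []"
      using split ab(3,4) by auto
    moreover have "set [p] \<subseteq> P" "concat [p] = p" using p by auto
    ultimately have "as @ bs = [p]"
      using fm \<open>p \<in> M\<close> unfolding free_monoid_with_primes_def by metis
    then show False using \<open>as \<noteq> []\<close> \<open>bs \<noteq> []\<close> by (cases as) auto
  qed
  ultimately show "p \<in> monoid_primes M" by (auto simp: monoid_primes_def)
qed

lemma free_monoid_with_primesI:
  assumes "[] \<in> M" "\<And>a b. a \<in> M \<Longrightarrow> b \<in> M \<Longrightarrow> a @ b \<in> M" "P \<subseteq> M" "[] \<notin> P"
    and exists: "\<And>c. c \<in> M \<Longrightarrow> \<exists>ps. set ps \<subseteq> P \<and> concat ps = c"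
    and cancel: "\<And>p p' x y. p \<in> P \<Longrightarrow> p' \<in> P \<Longrightarrow> x \<in> M \<Longrightarrow> y \<in> M \<Longrightarrow> p @ x = p' @ y \<Longrightarrow> p = p'"
  shows "free_monoid_with_primes M P"
proof -
  have concat_mem: "concat ps \<in> M" if "set ps \<subseteq> P" for ps
    using that assms(1-3) by (induction ps) auto
  have "ps = qs" if "set ps \<subseteq> P" "set qs \<subseteq> P" "concat ps = concat qs" for ps qs
    using that
  proof (induction ps arbitrary: qs)
    case Nil
    then show ?case using \<open>[] \<notin> P\<close> by (cases qs) auto
  next
    case (Cons p ps)
    then obtain q qs' where qs: "qs = q # qs'" using \<open>[] \<notin> P\<close> by (cases qs) auto
    with Cons.prems have "p = q" using cancel[of p q "concat ps" "concat qs'"] concat_mem by simp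
    with Cons qs show ?case by simp
  qed
  then show ?thesis using assms by (auto simp: free_monoid_with_primes_def)
qed

lemma card_pairs_with_weight_sum:
  assumes "\<And>j. finite {a \<in> A. f a = j}" "\<And>j. finite {b \<in> B. g b = j}"
  shows "card {(a, b) \<in> A \<times> B. f a + g b = (n::nat)}
    = (\<Sum>j=0..n. card {a \<in> A. f a = j} * card {b \<in> B. g b = n - j})"
proof -
  have "{(a, b) \<in> A \<times> B. f a + g b = n}
      = (\<Union>j\<in>{0..n}. {a \<in> A. f a = j} \<times> {b \<in> B. g b = n - j})"
    by force
  then show ?thesis
    by (simp only:) (subst card_UN_disjoint; auto simp: assms card_cartesian_product)
qed

lemma free_monoid_split_first_prime:
  assumes fm: "free_monoid_with_primes M P"
  shows "bij_betw (\<lambda>(p, m). p @ m) {(p, m) \<in> P \<times> M. sum_list p + sum_list m = n}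
    {c \<in> M. c \<noteq> [] \<and> sum_list c = n}"
proof (rule bij_betw_imageI)
  show "inj_on (\<lambda>(p, m). p @ m) {(p, m) \<in> P \<times> M. sum_list p + sum_list m = n}"
    using free_monoid_cancel[OF fm] by (auto simp: inj_on_def)
  show "(\<lambda>(p, m). p @ m) ` {(p, m) \<in> P \<times> M. sum_list p + sum_list m = n}
      = {c \<in> M. c \<noteq> [] \<and> sum_list c = n}"
  proof (intro equalityI subsetI)
    fix c assume "c \<in> {c \<in> M. c \<noteq> [] \<and> sum_list c = n}"
    then have c: "c \<in> M" "c \<noteq> []" "sum_list c = n" by auto
    obtain ps where ps: "set ps \<subseteq> P" "concat ps = c" using free_monoid_factor[OF fm c(1)] .
    then obtain p qs where "ps = p # qs" using c(2) by (cases ps) auto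
    with ps c have "(p, concat qs) \<in> {(p, m) \<in> P \<times> M. sum_list p + sum_list m = n}" "c = p @ concat qs"
      using free_monoid_concat_mem[OF fm] by auto
    then show "c \<in> (\<lambda>(p, m). p @ m) ` {(p, m) \<in> P \<times> M. sum_list p + sum_list m = n}"
      by force
  qed (use fm free_monoid_Nil_notin_primes[OF fm] in \<open>auto simp: free_monoid_with_primes_def\<close>)
qed

lemma comp_gf_free_monoid:
  assumes fm: "free_monoid_with_primes M P"
    and finite_levels: "\<And>n. finite {c \<in> M. sum_list c = n}"
  shows "comp_gf M = 1 + comp_gf P * comp_gf M"
proof (rule fps_ext)
  fix n
  have "P \<subseteq> M" using fm by (simp add: free_monoid_with_primes_def)
  then have finite_prime_levels: "finite {p \<in> P. sum_list p = j}" for j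
    using finite_levels[of j] by (auto elim: rev_finite_subset)
  have "{c \<in> M. sum_list c = n} = (if n = 0 then {[]} else {}) \<union> {c \<in> M. c \<noteq> [] \<and> sum_list c = n}"
    using fm by (auto simp: free_monoid_with_primes_def)
  moreover have "finite {c \<in> M. c \<noteq> [] \<and> sum_list c = n}"
    using finite_levels[of n] by (auto elim: rev_finite_subset)
  ultimately have "card {c \<in> M. sum_list c = n}
      = (if n = 0 then 1 else 0) + card {c \<in> M. c \<noteq> [] \<and> sum_list c = n}"
    by (simp add: card_Un_disjoint)
  also have "card {c \<in> M. c \<noteq> [] \<and> sum_list c = n}
      = card {(p, m) \<in> P \<times> M. sum_list p + sum_list m = n}"
    using bij_betw_same_card[OF free_monoid_split_first_prime[OF fm]] by simp
  also have "\<dots> = (\<Sum>j=0..n. card {p \<in> P. sum_list p = j} * card {m \<in> M. sum_list m = n - j})"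
    by (rule card_pairs_with_weight_sum[OF finite_prime_levels finite_levels])
  finally show "fps_nth (comp_gf M) n = fps_nth (1 + comp_gf P * comp_gf M) n"
    by (simp add: comp_gf_def fps_mult_nth)
qed

section \<open>Words beginning with an unbordered word\<close>

definition unbordered :: "'a list \<Rightarrow> bool" where
  "unbordered w \<longleftrightarrow> w \<noteq> [] \<and> (\<forall>u. u \<noteq> [] \<and> prefix u w \<and> suffix u w \<longrightarrow> u = w)"

lemma unbordered_occurrences_apart:
  assumes "unbordered w" "prefix w (z @ y)" "prefix w y" "z \<noteq> []"
  shows "length w \<le> length z"
proof (rule ccontr)
  assume short: "\<not> length w \<le> length z"
  \<comment> \<open>the overlap of the two occurrences of \<open>w\<close> is a border of \<open>w\<close>\<close>
  define u where "u = drop (length z) w"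
  obtain s where "z @ y = w @ s" using assms(2) by (auto elim: prefixE)
  then have "y = u @ s" using short by (auto simp: u_def append_eq_append_conv_if)
  then have "prefix u y" by simp
  then have "prefix u w" using assms(3) by (rule prefix_length_prefix) (simp add: u_def)
  moreover have "suffix u w" by (simp add: u_def suffix_drop)
  moreover have "u \<noteq> []" and shorter: "length u < length w"
    using short assms(4) unfolding u_def length_drop length_0_conv[symmetric] by linarith+
  ultimately have "u = w" using assms(1) unfolding unbordered_def by blast
  with shorter show False by simp
qed

definition prefix_monoid :: "'a set \<Rightarrow> 'a list \<Rightarrow> 'a list set" where
  "prefix_monoid A w = {[]} \<union> {c \<in> lists A. prefix w c}"

definition prefix_monoid_primes :: "'a set \<Rightarrow> 'a list \<Rightarrow> 'a list set" where
  "prefix_monoid_primes A w =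
     {c \<in> lists A. prefix w c \<and> (\<forall>a b. c = a @ b \<and> prefix w b \<longrightarrow> a = [])}"

lemma prefix_monoid_primes_iff:
  assumes "unbordered w"
  shows "w @ r \<in> prefix_monoid_primes A w \<longleftrightarrow> w @ r \<in> lists A \<and> \<not> sublist w r"
proof -
  have "(\<forall>a b. w @ r = a @ b \<and> prefix w b \<longrightarrow> a = []) \<longleftrightarrow> \<not> sublist w r"
  proof
    assume initial: "\<forall>a b. w @ r = a @ b \<and> prefix w b \<longrightarrow> a = []"
    show "\<not> sublist w r"
    proof
      assume "sublist w r"
      then obtain ps ss where "w @ r = (w @ ps) @ (w @ ss)" by (auto simp: sublist_def)
      then have "w @ ps = []" using initial[rule_format, of "w @ ps" "w @ ss"] by simp
      then show False using assms by (simp add: unbordered_def)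
    qed
  next
    assume no_occ: "\<not> sublist w r"
    show "\<forall>a b. w @ r = a @ b \<and> prefix w b \<longrightarrow> a = []"
    proof (intro allI impI, elim conjE)
      fix a b assume split: "w @ r = a @ b" and occ: "prefix w b"
      show "a = []"
      proof (rule ccontr)
        assume "a \<noteq> []"
        then have "length w \<le> length a"
          using unbordered_occurrences_apart[OF assms, of a b] split occ by (metis prefixI)
        then have "r = drop (length w) a @ b"
          using split by (simp add: append_eq_append_conv_if)
        then have "sublist w r" using occ by (auto simp: sublist_def elim!: prefixE)
        then show False using no_occ by contradiction
      qed
    qed
  qed
  then show ?thesis by (simp add: prefix_monoid_primes_def)
qed

lemma sublist_first_occurrence:
  assumes "w \<noteq> []" "sublist w r"
  obtains a b where "r = a @ b" "prefix w b" "\<not> sublist w a"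
  using assms(2)
proof (induction r arbitrary: thesis)
  case Nil
  then show ?case using assms(1) by simp
next
  case (Cons x r)
  show ?case
  proof (cases "prefix w (x # r)")
    case True
    then show ?thesis using Cons.prems(1)[of "[]"] assms(1) by simp
  next
    case False
    then have "sublist w r" using Cons.prems(2) sublist_Cons_right by metis
    then obtain a b where ab: "r = a @ b" "prefix w b" "\<not> sublist w a" using Cons.IH by blast
    have "\<not> prefix w (x # a)" using False ab(1) by (metis append_Cons prefix_prefix)
    then have "\<not> sublist w (x # a)" using ab(3) sublist_Cons_right by metis
    then show ?thesis using Cons.prems(1)[of "x # a" b] ab(1,2) by simp
  qed
qed

lemma prefix_monoid_factorization:
  assumes "unbordered w" "c \<in> prefix_monoid A w"
  shows "\<exists>ps. set ps \<subseteq> prefix_monoid_primes A w \<and> concat ps = c"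
  using assms(2)
proof (induction "length c" arbitrary: c rule: less_induct)
  case less
  show ?case
  proof (cases "c = []")
    case True
    then show ?thesis by (intro exI[of _ "[]"]) simp
  next
    case False
    then have "c \<in> lists A" "prefix w c" using less.prems by (auto simp: prefix_monoid_def)
    then obtain r where c: "c = w @ r" by (auto simp: prefix_def)
    show ?thesis
    proof (cases "sublist w r")
      case False
      then have "c \<in> prefix_monoid_primes A w"
        using prefix_monoid_primes_iff[OF assms(1)] c \<open>c \<in> lists A\<close> by simp
      then show ?thesis by (intro exI[of _ "[c]"]) simp
    next
      case True
      have "w \<noteq> []" using assms(1) by (simp add: unbordered_def)
      then obtain a b where ab: "r = a @ b" "prefix w b" "\<not> sublist w a"
        using sublist_first_occurrence True by blast
      have "w @ a \<in> prefix_monoid_primes A w"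
        using prefix_monoid_primes_iff[OF assms(1)] ab(3) c ab(1) \<open>c \<in> lists A\<close> by simp
      moreover have "b \<in> prefix_monoid A w"
        using ab(1,2) c \<open>c \<in> lists A\<close> by (simp add: prefix_monoid_def)
      moreover have "length b < length c" using c ab(1) \<open>w \<noteq> []\<close> by simp
      ultimately obtain ps where "set ps \<subseteq> prefix_monoid_primes A w" "concat ps = b"
        using less.hyps by blast
      then show ?thesis using \<open>w @ a \<in> prefix_monoid_primes A w\<close> c ab(1)
        by (intro exI[of _ "(w @ a) # ps"]) simp
    qed
  qed
qed

lemma prefix_monoid_primes_cancel:
  assumes "unbordered w"
    and p: "p \<in> prefix_monoid_primes A w" "p' \<in> prefix_monoid_primes A w"
    and x: "x \<in> prefix_monoid A w" and y: "y \<in> prefix_monoid A w"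
    and eq: "p @ x = p' @ y" and le: "length p \<le> length p'"
  shows "p = p'"
proof (rule ccontr)
  assume "p \<noteq> p'"
  define z where "z = drop (length p) p'"
  have "p = take (length p) p'" "x = z @ y"
    using eq[unfolded append_eq_append_conv_if if_P[OF le]] by (simp_all add: z_def)
  then have z: "p' = p @ z" "x = z @ y" by (metis append_take_drop_id z_def)+
  then have "z \<noteq> []" "x \<noteq> []" using \<open>p \<noteq> p'\<close> by auto
  then have "prefix w (z @ y)" using x z(2) by (simp add: prefix_monoid_def)
  have prefix_z: "prefix w z"
  proof (cases "y = []")
    case True
    then show ?thesis using \<open>prefix w (z @ y)\<close> by simp
  next
    case False
    then have "prefix w y" using y by (simp add: prefix_monoid_def)
    then have "length w \<le> length z"
      using unbordered_occurrences_apart[OF assms(1) \<open>prefix w (z @ y)\<close>] \<open>z \<noteq> []\<close> by simp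
    then show ?thesis using \<open>prefix w (z @ y)\<close> prefix_length_prefix[of w "z @ y" z] by simp
  qed
  have "\<forall>a b. p' = a @ b \<and> prefix w b \<longrightarrow> a = []"
    using p(2) by (simp add: prefix_monoid_primes_def)
  then have "p = []" using z(1) prefix_z by blast
  moreover have "prefix w p" "w \<noteq> []"
    using p(1) assms(1) by (simp_all add: prefix_monoid_primes_def unbordered_def)
  ultimately show False by simp
qed

theorem free_monoid_prefix_monoid:
  assumes "unbordered w"
  shows "free_monoid_with_primes (prefix_monoid A w) (prefix_monoid_primes A w)"
proof (rule free_monoid_with_primesI)
  show "[] \<notin> prefix_monoid_primes A w"
    using assms by (simp add: prefix_monoid_primes_def unbordered_def)
  show "p = p'" if "p \<in> prefix_monoid_primes A w" "p' \<in> prefix_monoid_primes A w"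
    "x \<in> prefix_monoid A w" "y \<in> prefix_monoid A w" "p @ x = p' @ y" for p p' x y
    using prefix_monoid_primes_cancel[OF assms that] prefix_monoid_primes_cancel[OF assms that(2,1,4,3) that(5)[symmetric]]
    by (metis nat_le_linear)
qed (use prefix_monoid_factorization[OF assms] in \<open>auto simp: prefix_monoid_def prefix_monoid_primes_def\<close>)

lemma unbordered_Cons_replicate:
  assumes "x \<noteq> y"
  shows "unbordered (x # replicate n y)"
  unfolding unbordered_def
proof (intro conjI allI impI)
  fix u assume u: "u \<noteq> [] \<and> prefix u (x # replicate n y) \<and> suffix u (x # replicate n y)"
  then obtain v where v: "x # replicate n y = v @ u" by (auto elim: suffixE)
  obtain zs where "x # replicate n y = u @ zs" using u by (auto simp: prefix_def)
  then have "hd u = x" using u by (metis hd_append2 list.sel(1))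
  show "u = x # replicate n y"
  proof (cases v)
    case Nil
    then show ?thesis using v by simp
  next
    case (Cons x' v')
    then have "replicate n y = v' @ u" using v by simp
    then have "set u \<subseteq> {y}" by (metis Un_subset_iff set_append set_replicate_conv_if empty_subsetI order_refl)
    then have "hd u = y" using u hd_in_set by blast
    then show ?thesis using \<open>hd u = x\<close> assms by simp
  qed
qed simp

lemma sublist_Cons_replicate_append_iff:
  assumes "x \<noteq> y"
  shows "sublist (x # v) (replicate i y @ q) \<longleftrightarrow> sublist (x # v) q"
  using assms by (induction i) (auto simp: sublist_Cons_right)

lemma split_replicate_ones:
  assumes "r \<in> lists {1, 2::nat}"
  obtains i q where "r = replicate i 1 @ q" "q = [] \<or> hd q = 2"
proof
  show "r = replicate (length (takeWhile ((=) 1) r)) 1 @ dropWhile ((=) 1) r"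
    by (metis (mono_tags) replicate_eqI set_takeWhileD takeWhile_dropWhile_id)
  show "dropWhile ((=) 1) r = [] \<or> hd (dropWhile ((=) 1) r) = 2"
  proof (cases "dropWhile ((=) 1) r = []")
    case nonempty: False
    then have "hd (dropWhile ((=) 1) r) \<noteq> 1" using hd_dropWhile[of "(=) 1" r] by simp
    moreover have "hd (dropWhile ((=) 1) r) \<in> set r"
      using hd_in_set[OF nonempty] by (rule set_dropWhileD)
    ultimately show ?thesis using assms by auto
  qed simp
qed

lemma fib_comp_iff_lists: "fib_comp c \<longleftrightarrow> c \<in> lists {1, 2}"
  by (auto simp: fib_comp_def)

lemma prefix_monoid_primes_two_ones:
  fixes n :: nat
  defines "w \<equiv> 2 # replicate n (1::nat)"
  shows "prefix_monoid_primes {1, 2} w = {w @ replicate i 1 @ q | i q.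
           q = [] \<or> (fib_comp q \<and> q \<noteq> [] \<and> hd q = 2 \<and> \<not> sublist w q)}"
    (is "_ = ?P")
proof -
  have unb: "unbordered w" unfolding w_def by (rule unbordered_Cons_replicate) simp
  have ones: "sublist w (replicate i 1 @ q) \<longleftrightarrow> sublist w q" for i q
    unfolding w_def by (rule sublist_Cons_replicate_append_iff) simp
  show ?thesis
  proof (intro set_eqI iffI)
    fix c
    assume prime: "c \<in> prefix_monoid_primes {1, 2} w"
    then have "c \<in> lists {1, 2}" "prefix w c" by (simp_all add: prefix_monoid_primes_def)
    then obtain r where c: "c = w @ r" by (auto simp: prefix_def)
    then have "\<not> sublist w r" using prefix_monoid_primes_iff[OF unb] prime by simp
    obtain i q where "r = replicate i 1 @ q" "q = [] \<or> hd q = 2"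
      using split_replicate_ones \<open>c \<in> lists {1, 2}\<close> c by auto
    then show "c \<in> ?P" using c \<open>c \<in> lists {1, 2}\<close> \<open>\<not> sublist w r\<close> ones
      by (auto simp: fib_comp_iff_lists)
  next
    fix c
    assume "c \<in> ?P"
    then obtain i q where c: "c = w @ replicate i 1 @ q"
      and q: "q = [] \<or> (fib_comp q \<and> q \<noteq> [] \<and> hd q = 2 \<and> \<not> sublist w q)" by blast
    have "c \<in> lists {1, 2}" using c q by (auto simp: w_def fib_comp_iff_lists)
    moreover have "\<not> sublist w (replicate i 1 @ q)" using q ones by (auto simp: w_def)
    ultimately show "c \<in> prefix_monoid_primes {1, 2} w"
      using prefix_monoid_primes_iff[OF unb] c by simp
  qed
qed

section \<open>Generating functions\<close>

lemma length_le_sum_list: "0 \<notin> set c \<Longrightarrow> length c \<le> sum_list (c :: nat list)"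
  by (induction c) auto

lemma finite_compositions: "finite {c :: nat list. 0 \<notin> set c \<and> sum_list c = n}"
proof (rule finite_subset)
  show "{c. 0 \<notin> set c \<and> sum_list c = n} \<subseteq> {c. set c \<subseteq> {..n} \<and> length c \<le> n}"
    using length_le_sum_list member_le_sum_list by fastforce
qed (simp add: finite_lists_length_le)

lemma finite_fib_comp_levels:
  assumes "S \<subseteq> lists {1, 2::nat}"
  shows "finite {c \<in> S. sum_list c = n}"
  by (rule finite_subset[OF _ finite_compositions[of n]]) (use assms in \<open>fastforce dest: in_listsD\<close>)

lemma free_monoid_lists: "free_monoid_with_primes (lists A) ((\<lambda>a. [a]) ` A)"
proof (rule free_monoid_with_primesI)
  show "\<exists>ps. set ps \<subseteq> (\<lambda>a. [a]) ` A \<and> concat ps = c" if "c \<in> lists A" for c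
    using that by (intro exI[of _ "map (\<lambda>a. [a]) c"]) auto
qed auto

lemma comp_gf_singletons: "fps_nth (comp_gf ((\<lambda>a. [a]) ` A)) n = (if n \<in> A then 1 else 0)"
proof -
  have "{c \<in> (\<lambda>a. [a]) ` A. sum_list c = n} = (if n \<in> A then {[n]} else {})" by auto
  then show ?thesis by (simp add: comp_gf_def)
qed

lemma comp_gf_fib_comp: "(1 - fps_X - fps_X ^ 2) * comp_gf (lists {1, 2}) = 1"
proof -
  have "comp_gf ((\<lambda>a. [a]) ` {1, 2}) = fps_X + fps_X ^ 2"
    by (rule fps_ext) (subst comp_gf_singletons, simp)
  then have "comp_gf (lists {1, 2}) = 1 + (fps_X + fps_X ^ 2) * comp_gf (lists {1, 2})"
    using comp_gf_free_monoid[OF free_monoid_lists finite_fib_comp_levels[OF order_refl]] by simp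
  then show ?thesis by (simp add: algebra_simps)
qed

lemma comp_gf_insert_Nil:
  assumes "[] \<notin> S" "finite {c \<in> S. sum_list c = 0}"
  shows "comp_gf (insert [] S) = 1 + comp_gf S"
proof (rule fps_ext)
  fix n
  have "{c \<in> insert [] S. sum_list c = n} = (if n = 0 then insert [] else id) {c \<in> S. sum_list c = n}"
    by auto
  then show "fps_nth (comp_gf (insert [] S)) n = fps_nth (1 + comp_gf S) n"
    using assms by (simp add: comp_gf_def)
qed

lemma comp_gf_image_append: "comp_gf ((@) w ` S) = fps_X ^ sum_list w * comp_gf S"
proof (rule fps_ext)
  fix n
  have "{c \<in> (@) w ` S. sum_list c = n}
      = (if n < sum_list w then {} else (@) w ` {c \<in> S. sum_list c = n - sum_list w})"
    by (auto intro: image_eqI)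
  then show "fps_nth (comp_gf ((@) w ` S)) n = fps_nth (fps_X ^ sum_list w * comp_gf S) n"
    by (simp add: comp_gf_def fps_X_power_mult_nth card_image inj_on_def)
qed

lemma prefix_monoid_eq_image:
  assumes "w \<in> lists A"
  shows "prefix_monoid A w = insert [] ((@) w ` lists A)"
  using assms by (auto simp: prefix_monoid_def prefix_def)

lemma comp_gf_prefix_monoid:
  assumes "w \<in> lists {1, 2}" "w \<noteq> []"
  shows "comp_gf (prefix_monoid {1, 2} w) = 1 + fps_X ^ sum_list w * comp_gf (lists {1, 2})"
proof -
  have "[] \<notin> (@) w ` lists {1, 2}" "(@) w ` lists {1, 2} \<subseteq> lists {1, 2}" using assms by auto
  then have "comp_gf (prefix_monoid {1, 2} w) = 1 + comp_gf ((@) w ` lists {1, 2})"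
    unfolding prefix_monoid_eq_image[OF assms(1)] by (intro comp_gf_insert_Nil finite_fib_comp_levels)
  then show ?thesis by (simp add: comp_gf_image_append)
qed

lemma prime_gf_from_monoid_gf:
  fixes A F G :: "'a::field fps"
  assumes "0 < k"
    and fib: "(1 - fps_X - fps_X ^ 2) * F = 1"
    and monoid: "G = 1 + fps_X ^ k * F"
    and free: "G = 1 + A * G"
  shows "A = fps_X ^ k / (1 - fps_X - fps_X ^ 2 + fps_X ^ k)"
    and "1 + fps_X ^ k / (1 - fps_X - fps_X ^ 2)
      = inverse (1 - fps_X ^ k / (1 - fps_X - fps_X ^ 2 + fps_X ^ k) :: 'a fps)"
proof -
  define E :: "'a fps" where "E = 1 - fps_X - fps_X ^ 2"
  define D :: "'a fps" where "D = E + fps_X ^ k"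
  have E0: "fps_nth E 0 \<noteq> 0" and D0: "fps_nth D 0 \<noteq> 0"
    using \<open>0 < k\<close> by (simp_all add: E_def D_def)
  have EF: "E * F = 1" using fib by (simp add: E_def)
  have AG: "(1 - A) * G = 1" using free by (simp add: algebra_simps)
  have "G = D * F" using monoid EF by (simp add: D_def algebra_simps)
  then have "(1 - A) * D = ((1 - A) * G) * E" using EF by (simp add: ac_simps)
  also have "\<dots> = E" using AG by simp
  finally have "A * D = fps_X ^ k" by (simp add: D_def algebra_simps)
  then have "A = fps_X ^ k * inverse D"
    using inverse_mult_eq_1'[OF D0] by (metis mult.assoc mult.right_neutral)
  also have "\<dots> = fps_X ^ k / D" using D0 by (simp add: fps_divide_unit)
  finally show A: "A = fps_X ^ k / (1 - fps_X - fps_X ^ 2 + fps_X ^ k)" by (simp add: D_def E_def)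
  have "1 + fps_X ^ k / E = G"
    using monoid E0 fps_inverse_unique[OF EF] by (simp add: fps_divide_unit)
  also have "\<dots> = inverse (1 - fps_X ^ k / (1 - fps_X - fps_X ^ 2 + fps_X ^ k))"
    using fps_inverse_unique[OF AG] A by simp
  finally show "1 + fps_X ^ k / (1 - fps_X - fps_X ^ 2)
      = inverse (1 - fps_X ^ k / (1 - fps_X - fps_X ^ 2 + fps_X ^ k) :: 'a fps)"
    by (simp only: E_def)
qed

theorem proposition6:
  fixes k :: nat
  assumes "k \<ge> 2"
  defines "w \<equiv> 2 # replicate (k - 2) (1::nat)"
  defines "M \<equiv> {[]} \<union> {c. fib_comp c \<and> prefix w c}"
  defines "P \<equiv> {w @ replicate i 1 @ q | i q.
                   q = [] \<or> (fib_comp q \<and> q \<noteq> [] \<and> hd q = 2 \<and> \<not> sublist w q)}"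
  shows "free_monoid_with_primes M P \<and> monoid_primes M = P
     \<and> comp_gf P = fps_X ^ k / (1 - fps_X - fps_X ^ 2 + fps_X ^ k)
     \<and> 1 + fps_X ^ k / (1 - fps_X - fps_X ^ 2)
         = inverse (1 - fps_X ^ k / (1 - fps_X - fps_X ^ 2 + fps_X ^ k) :: real fps)"
proof -
  have M: "M = prefix_monoid {1, 2} w"
    unfolding M_def prefix_monoid_def by (auto simp: fib_comp_iff_lists)
  have P: "P = prefix_monoid_primes {1, 2} w"
    unfolding P_def w_def by (rule prefix_monoid_primes_two_ones[symmetric])
  have free: "free_monoid_with_primes M P"
    unfolding M P w_def by (rule free_monoid_prefix_monoid, rule unbordered_Cons_replicate) simp
  have "w \<in> lists {1, 2}" "w \<noteq> []" "sum_list w = k"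
    using assms(1) by (auto simp: w_def sum_list_replicate)
  then have monoid_gf: "comp_gf M = 1 + fps_X ^ k * comp_gf (lists {1, 2})"
    unfolding M by (metis comp_gf_prefix_monoid)
  have "M \<subseteq> lists {1, 2}" unfolding M by (auto simp: prefix_monoid_def)
  then have "comp_gf M = 1 + comp_gf P * comp_gf M"
    by (intro comp_gf_free_monoid free finite_fib_comp_levels)
  then have "comp_gf P = fps_X ^ k / (1 - fps_X - fps_X ^ 2 + fps_X ^ k)
     \<and> 1 + fps_X ^ k / (1 - fps_X - fps_X ^ 2)
         = inverse (1 - fps_X ^ k / (1 - fps_X - fps_X ^ 2 + fps_X ^ k) :: real fps)"
    using prime_gf_from_monoid_gf[OF _ comp_gf_fib_comp monoid_gf] assms(1) by simp
  then show ?thesis using free monoid_primes_free_monoid[OF free] by blast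
qed

end
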